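(* Let $f(X)=X^n+a_{n-1}X^{n-1}+\dots+a_1X+a_0\in K[X]$, $n\geq 1$, be a monic regular polynomial. For each value $m$ that is the valuation of some root of $f$ in $\overline{K}$, let $f_m(X)=\prod (X-\zeta)$, the product taken (with multiplicity) over the roots $\zeta\in\overline{K}$ of $f$ with $v(\zeta)=m$, so that $f=\prod_m f_m$. Then every factor $f_m$ is a regular polynomial.
   Context: $K$ is a field complete with respect to a non-archimedean discrete valuation $v$ with $v(\pi)=1$ for a uniformizer $\pi$ of the valuation ring $A=\{x\in K: v(x)\geq 0\}$; the residue field $\kappa=A/\pi A$ is finite with $q$ elements and characteristic $p$; $v$ also denotes the unique extension of the valuation to an algebraic closure $\overline{K}$. It is known that each $f_m$ has coefficients in $K$. For $h=\sum_{i=0}^d c_iX^i$ (coefficients in $K$), the Newton polygon of $h$ is the convex hull of the points $(i,v(c_i))$ with $c_i\neq 0$. An edge of a polygon in $\mathbb{R}^2$ is a lower edge if it has an inner normal vector with positive second coordinate. $h$ is called regular if for every lower edge $S$ of its Newton polygon, with vertices $(s,v(c_s))$ and $(s',v(c_{s'}))$, $s>s'$: (1) $S$ contains exactly two points of the set $\{(i,v(c_i)) : 0\leq i\leq d,\ c_i\neq 0\}$; (2) $p\nmid (s-s')$. *)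

theory Defs
  imports "HOL-Analysis.Analysis" "HOL-Computational_Algebra.Polynomial" "HOL-Library.Extended_Real"
begin

text \<open>Ambient field 'a plays the role of the algebraic closure of K; K is a subset of it.
  Valuations take values in ereal with v x = \<infinity> iff x = 0.\<close>

definition is_subfield :: "'a::field set \<Rightarrow> bool" where
  "is_subfield K \<longleftrightarrow> 0 \<in> K \<and> 1 \<in> K \<and>
     (\<forall>x\<in>K. \<forall>y\<in>K. x + y \<in> K \<and> x - y \<in> K \<and> x * y \<in> K) \<and>
     (\<forall>x\<in>K. x \<noteq> 0 \<longrightarrow> inverse x \<in> K)"

definition nonarch_valuation :: "('a::field \<Rightarrow> ereal) \<Rightarrow> bool" where
  "nonarch_valuation v \<longleftrightarrow>
     (\<forall>x. v x = \<infinity> \<longleftrightarrow> x = 0) \<and>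
     (\<forall>x. v x \<noteq> -\<infinity>) \<and>
     (\<forall>x y. v (x * y) = v x + v y) \<and>
     (\<forall>x y. v (x + y) \<ge> min (v x) (v y))"

definition discrete_on_with_uniformizer :: "('a::field \<Rightarrow> ereal) \<Rightarrow> 'a set \<Rightarrow> 'a \<Rightarrow> bool" where
  "discrete_on_with_uniformizer v K \<pi> \<longleftrightarrow> \<pi> \<in> K \<and> v \<pi> = 1 \<and>
     (\<forall>x\<in>K. x \<noteq> 0 \<longrightarrow> (\<exists>k::int. v x = ereal (of_int k)))"

definition complete_wrt :: "('a::field \<Rightarrow> ereal) \<Rightarrow> 'a set \<Rightarrow> bool" where
  "complete_wrt v K \<longleftrightarrow>
     (\<forall>x::nat \<Rightarrow> 'a. (\<forall>n. x n \<in> K) \<and>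
        (\<forall>M::real. \<exists>N. \<forall>m\<ge>N. \<forall>n\<ge>N. v (x m - x n) \<ge> ereal M) \<longrightarrow>
        (\<exists>l\<in>K. \<forall>M::real. \<exists>N. \<forall>n\<ge>N. v (x n - l) \<ge> ereal M))"

definition val_ring :: "('a::field \<Rightarrow> ereal) \<Rightarrow> 'a set \<Rightarrow> 'a set" where
  "val_ring v K = {x \<in> K. v x \<ge> 0}"

definition residue_rel :: "('a::field \<Rightarrow> ereal) \<Rightarrow> 'a set \<Rightarrow> 'a \<Rightarrow> ('a \<times> 'a) set" where
  "residue_rel v K \<pi> = {(x, y). x \<in> val_ring v K \<and> y \<in> val_ring v K \<and>
      (\<exists>a\<in>val_ring v K. x - y = \<pi> * a)}"

definition residue_field :: "('a::field \<Rightarrow> ereal) \<Rightarrow> 'a set \<Rightarrow> 'a \<Rightarrow> 'a set set" where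
  "residue_field v K \<pi> = val_ring v K // residue_rel v K \<pi>"

definition algebraically_closed_field :: "'a::field itself \<Rightarrow> bool" where
  "algebraically_closed_field _ \<longleftrightarrow> (\<forall>f::'a poly. degree f \<ge> 1 \<longrightarrow> (\<exists>x. poly f x = 0))"

definition algebraic_over :: "'a::field set \<Rightarrow> bool" where
  "algebraic_over K \<longleftrightarrow> (\<forall>x::'a. \<exists>g. g \<noteq> 0 \<and> (\<forall>i. coeff g i \<in> K) \<and> poly g x = 0)"

definition np_point :: "('a::field \<Rightarrow> ereal) \<Rightarrow> 'a poly \<Rightarrow> nat \<Rightarrow> real \<times> real" where
  "np_point v h i = (real i, real_of_ereal (v (coeff h i)))"

definition np_points :: "('a::field \<Rightarrow> ereal) \<Rightarrow> 'a poly \<Rightarrow> (real \<times> real) set" where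
  "np_points v h = {np_point v h i | i. coeff h i \<noteq> 0}"

definition newton_polygon :: "('a::field \<Rightarrow> ereal) \<Rightarrow> 'a poly \<Rightarrow> (real \<times> real) set" where
  "newton_polygon v h = convex hull (np_points v h)"

definition lower_edge :: "('a::field \<Rightarrow> ereal) \<Rightarrow> 'a poly \<Rightarrow> (real \<times> real) set \<Rightarrow> bool" where
  "lower_edge v h S \<longleftrightarrow> S face_of newton_polygon v h \<and> aff_dim S = 1 \<and>
     (\<exists>u::real \<times> real. snd u > 0 \<and>
        S = {x \<in> newton_polygon v h. \<forall>y \<in> newton_polygon v h. inner u x \<le> inner u y})"

definition regular_poly :: "('a::field \<Rightarrow> ereal) \<Rightarrow> nat \<Rightarrow> 'a poly \<Rightarrow> bool" where
  "regular_poly v p h \<longleftrightarrow>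
     (\<forall>S. lower_edge v h S \<longrightarrow>
        card (S \<inter> np_points v h) = 2 \<and>
        (\<forall>s s'. s' < s \<and> coeff h s \<noteq> 0 \<and> coeff h s' \<noteq> 0 \<and>
           np_point v h s extreme_point_of S \<and> np_point v h s' extreme_point_of S \<longrightarrow>
           \<not> p dvd (s - s')))"

definition val_factor :: "('a::field \<Rightarrow> ereal) \<Rightarrow> 'a poly \<Rightarrow> ereal \<Rightarrow> 'a poly" where
  "val_factor v f m = (\<Prod>\<zeta>\<in>{\<zeta>. poly f \<zeta> = 0 \<and> v \<zeta> = m}. [:-\<zeta>, 1:] ^ order \<zeta> f)"

end

theory Submission
  imports Defs
begin

text \<open>
  For real \<open>m\<close> let \<open>wval m h k = v (coeff h k) + m * k\<close>, the value at the \<open>k\<close>-th point of the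
  Newton polygon of \<open>h\<close> of the linear form with inner normal \<open>(m, 1)\<close>. The lower edges of the
  Newton polygon are exactly the faces on which some such form attains its minimum at two
  points, so \<open>h\<close> is regular iff whenever \<open>wval m h\<close> is minimal at indices \<open>a < b\<close>, these are its
  only minimisers and \<open>p\<close> does not divide \<open>b - a\<close>.

  If \<open>g\<close> attains its \<open>m\<close>-minimum at a single index \<open>k\<close>, then in every coefficient of \<open>h * g\<close>
  at most one term can have minimal valuation, so the minimisers of \<open>wval m (h * g)\<close> are those
  of \<open>wval m h\<close> shifted by \<open>k\<close>. Over an algebraically closed field a polynomial with no root of
  valuation \<open>m\<close> is a product of linear factors with a unique \<open>m\<close>-minimiser. Hence, writing
  \<open>f = f\<^sub>m * g\<close>, the factor \<open>f\<^sub>m\<close> has a unique minimiser for every weight other than \<open>m\<close>, and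
  for the weight \<open>m\<close> its minimisers reappear, shifted, as minimisers of \<open>f\<close>, where regularity
  of \<open>f\<close> controls them.
\<close>

lemma ereal_le_plus_real_iff: "ereal a \<le> x + ereal r \<longleftrightarrow> ereal (a - r) \<le> x"
  by (cases x) auto

lemma ereal_less_plus_real_iff: "ereal a < x + ereal r \<longleftrightarrow> ereal (a - r) < x"
  by (cases x) auto

lemma ereal_eq_plus_real_iff: "x + ereal r = ereal a \<longleftrightarrow> x = ereal (a - r)"
  by (cases x) auto

lemma ereal_add_le_less: "ereal a \<le> x \<Longrightarrow> ereal b < y \<Longrightarrow> ereal (a + b) < x + y"
  by (cases x; cases y) auto

lemma mem_image_add_iff: "i \<in> (\<lambda>j. j + k) ` A \<longleftrightarrow> k \<le> i \<and> i - k \<in> A"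
  for i k :: nat by (auto intro: image_eqI[of _ _ "i - k"])

section \<open>Minimising a linear form over a polytope\<close>

lemma convex_hull_inner_ge:
  assumes "\<And>p. p \<in> P \<Longrightarrow> c \<le> inner u p" "x \<in> convex hull P"
  shows "c \<le> inner u x"
proof -
  have "convex hull P \<subseteq> {x. c \<le> inner u x}"
    by (rule hull_minimal) (use assms(1) convex_halfspace_ge in auto)
  then show ?thesis
    using assms(2) by auto
qed

lemma argmin_face_of:
  assumes "convex H"
  shows "{x \<in> H. \<forall>y\<in>H. inner u x \<le> inner u y} face_of H"
proof (cases "{x \<in> H. \<forall>y\<in>H. inner u x \<le> inner u y} = {}")
  case False
  then obtain x0 where x0: "x0 \<in> H" "\<forall>y\<in>H. inner u x0 \<le> inner u y"
    by blast
  then have "{x \<in> H. \<forall>y\<in>H. inner u x \<le> inner u y} = H \<inter> {x. inner u x = inner u x0}"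
    by (auto intro: order.antisym)
  then show ?thesis
    using face_of_Int_supporting_hyperplane_ge[OF assms, where a = u and b = "inner u x0"] x0
    by simp
qed (simp only: empty_face_of)

lemma argmin_convex_hull:
  fixes P :: "'a::euclidean_space set"
  assumes "finite P"
  shows "{x \<in> convex hull P. \<forall>y \<in> convex hull P. inner u x \<le> inner u y}
    = convex hull {p \<in> P. \<forall>q \<in> P. inner u p \<le> inner u q}"
    (is "?F = convex hull ?M")
proof
  have "?F face_of convex hull P"
    by (rule argmin_face_of) simp
  then obtain S where S: "S \<subseteq> P" "?F = convex hull S"
    using face_of_convex_hull_subset finite_imp_compact[OF assms] by blast
  have "S \<subseteq> ?M"
    using S hull_subset[of S convex] hull_subset[of P convex] by blast
  then show "?F \<subseteq> convex hull ?M"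
    using S(2) hull_mono by blast
next
  show "convex hull ?M \<subseteq> ?F"
  proof
    fix x assume x: "x \<in> convex hull ?M"
    have "inner u x \<le> inner u y" if y: "y \<in> convex hull P" for y
    proof -
      have "inner u p \<le> inner u y" if "p \<in> ?M" for p
        using convex_hull_inner_ge[of P "inner u p" u y] that y by blast
      then show ?thesis
        using convex_hull_inner_ge[of ?M "- inner u y" "- u" x] x by simp
    qed
    moreover have "x \<in> convex hull P"
      using x hull_mono[of ?M P] by blast
    ultimately show "x \<in> ?F"
      by blast
  qed
qed

section \<open>Splitting off the roots in a finite set\<close>

lemma prod_root_powers_dvd:
  fixes f :: "'a::field poly"
  assumes "f \<noteq> 0" "finite B"
  shows "(\<Prod>z\<in>B. [:- z, 1:] ^ order z f) dvd f"
  using assms(2)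
proof (induction B rule: finite_induct)
  case (insert a B)
  define P where "P = (\<Prod>z\<in>B. [:- z, 1:] ^ order z f)"
  obtain r where r: "f = P * r"
    using insert.IH unfolding P_def by (elim dvdE)
  have "poly P a \<noteq> 0"
    unfolding P_def using insert.hyps by (auto simp: poly_prod prod_zero_iff)
  then have "order a r = order a f"
    using order_mult[of P r a] order_0I[of P a] r assms(1) by simp
  then have "[:- a, 1:] ^ order a f dvd r"
    by (metis order_1)
  then have "[:- a, 1:] ^ order a f * P dvd P * r"
    by (simp add: mult.commute mult_dvd_mono)
  then show ?case
    using insert.hyps r unfolding P_def by simp
qed simp

lemma poly_cofactor_prod_root_powers_neq_0:
  fixes f :: "'a::field poly"
  assumes "f = (\<Prod>z\<in>B. [:- z, 1:] ^ order z f) * g" "f \<noteq> 0" "finite B" "z \<in> B"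
  shows "poly g z \<noteq> 0"
proof
  assume "poly g z = 0"
  define P where "P = (\<Prod>z\<in>B. [:- z, 1:] ^ order z f)"
  have "g \<noteq> 0"
    using assms(1,2) by auto
  have "[:- z, 1:] ^ order z f dvd P"
    unfolding P_def using assms(3,4) by (rule dvd_prodI)
  then have "order z f \<le> order z P"
    using assms(1,2) unfolding P_def[symmetric] by (auto simp: order_divides)
  moreover have "order z f = order z P + order z g"
    using assms(1,2) unfolding P_def[symmetric] by (metis order_mult)
  moreover have "order z g > 0"
    using \<open>poly g z = 0\<close> \<open>g \<noteq> 0\<close> by (simp add: order_gt_0_iff)
  ultimately show False
    by simp
qed

section \<open>Valuations\<close>

locale valued_field =
  fixes v :: "'a::field \<Rightarrow> ereal"
  assumes nonarch: "nonarch_valuation v"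
begin

lemma val_eq_infinity_iff: "v x = \<infinity> \<longleftrightarrow> x = 0"
  using nonarch unfolding nonarch_valuation_def by blast

lemma val_neq_minfinity: "v x \<noteq> -\<infinity>"
  using nonarch unfolding nonarch_valuation_def by blast

lemma val_mult: "v (x * y) = v x + v y"
  using nonarch unfolding nonarch_valuation_def by blast

lemma val_add_ge_min: "min (v x) (v y) \<le> v (x + y)"
  using nonarch unfolding nonarch_valuation_def by blast

lemma val_zero [simp]: "v 0 = \<infinity>"
  using val_eq_infinity_iff by simp

lemma val_nonzero_eq_ereal: "x \<noteq> 0 \<Longrightarrow> v x = ereal (real_of_ereal (v x))"
  using val_eq_infinity_iff[of x] val_neq_minfinity[of x] by (cases "v x") auto

lemma val_one [simp]: "v 1 = 0"
proof -
  obtain r where "v 1 = ereal r"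
    using val_nonzero_eq_ereal[of 1] by simp
  moreover have "v 1 = v 1 + v 1"
    using val_mult[of 1 1] by simp
  ultimately show ?thesis
    by (simp add: zero_ereal_def)
qed

lemma val_minus [simp]: "v (- x) = v x"
proof -
  obtain r where r: "v (- 1) = ereal r"
    using val_nonzero_eq_ereal[of "- 1"] by simp
  moreover have "v (- 1) + v (- 1) = 0"
    using val_mult[of "- 1" "- 1"] by simp
  ultimately have "v (- 1) = 0"
    by (simp add: zero_ereal_def)
  then show ?thesis
    using val_mult[of "- 1" x] by simp
qed

lemma val_sum_ge:
  assumes "finite A" "\<And>i. i \<in> A \<Longrightarrow> c \<le> v (f i)"
  shows "c \<le> v (sum f A)"
  using assms
proof (induction A rule: finite_induct)
  case (insert a A)
  then have "c \<le> min (v (f a)) (v (sum f A))"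
    by simp
  also have "\<dots> \<le> v (f a + sum f A)"
    by (rule val_add_ge_min)
  finally show ?case
    using insert.hyps by simp
qed simp

lemma val_sum_gt:
  assumes "finite A" "c < \<infinity>" "\<And>i. i \<in> A \<Longrightarrow> c < v (f i)"
  shows "c < v (sum f A)"
  using assms
proof (induction A rule: finite_induct)
  case (insert a A)
  then have "c < min (v (f a)) (v (sum f A))"
    by simp
  also have "\<dots> \<le> v (f a + sum f A)"
    by (rule val_add_ge_min)
  finally show ?case
    using insert.hyps by simp
qed simp

lemma val_add_eq_left:
  assumes "v x < v y" shows "v (x + y) = v x"
proof (rule antisym)
  show "v x \<le> v (x + y)"
    using val_add_ge_min[of x y] assms by simp
  have "min (v (x + y)) (v y) \<le> v x"
    using val_add_ge_min[of "x + y" "- y"] by simp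
  then show "v (x + y) \<le> v x"
    using assms by (auto simp: min_def split: if_splits)
qed

section \<open>Weighted valuations of the coefficients\<close>

definition wval :: "real \<Rightarrow> 'a poly \<Rightarrow> nat \<Rightarrow> ereal" where
  "wval m h k = v (coeff h k) + ereal (m * real k)"

definition wval_argmin :: "real \<Rightarrow> 'a poly \<Rightarrow> nat set" where
  "wval_argmin m h = {i. coeff h i \<noteq> 0 \<and> (\<forall>j. wval m h i \<le> wval m h j)}"

lemma coeff_nonzero_if_wval_eq: "wval m h k = ereal \<mu> \<Longrightarrow> coeff h k \<noteq> 0"
  unfolding wval_def by auto

lemma val_coeff_mult_term:
  assumes "j \<le> i"
  shows "v (coeff h1 j * coeff h2 (i - j)) + ereal (m * real i)
    = wval m h1 j + wval m h2 (i - j)"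
proof -
  have "ereal (m * i) = ereal (m * j) + ereal (m * real (i - j))"
    using assms by (simp add: of_nat_diff algebra_simps)
  then show ?thesis
    unfolding wval_def val_mult by (simp add: ac_simps)
qed

lemma wval_mult_ge:
  assumes "\<And>j. ereal \<mu>1 \<le> wval m h1 j" "\<And>j. ereal \<mu>2 \<le> wval m h2 j"
  shows "ereal (\<mu>1 + \<mu>2) \<le> wval m (h1 * h2) i"
proof -
  have "ereal (\<mu>1 + \<mu>2 - m * i) \<le> v (coeff (h1 * h2) i)"
    unfolding coeff_mult
  proof (rule val_sum_ge)
    fix j assume "j \<in> {..i}"
    then have "ereal (\<mu>1 + \<mu>2) \<le> v (coeff h1 j * coeff h2 (i - j)) + ereal (m * i)"
      using add_mono[OF assms(1)[of j] assms(2)[of "i - j"]] val_coeff_mult_term[of j i] by simp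
    then show "ereal (\<mu>1 + \<mu>2 - m * i) \<le> v (coeff h1 j * coeff h2 (i - j))"
      by (simp add: ereal_le_plus_real_iff)
  qed simp
  then show ?thesis
    unfolding wval_def by (simp add: ereal_le_plus_real_iff)
qed

lemma wval_mult_term_gt:
  assumes "\<And>j. ereal \<mu>1 \<le> wval m h1 j" "\<And>j. ereal \<mu>2 \<le> wval m h2 j"
    and "\<And>j. j \<noteq> k \<Longrightarrow> ereal \<mu>2 < wval m h2 j"
    and "j \<le> i" "i - j \<noteq> k \<or> ereal \<mu>1 < wval m h1 j"
  shows "ereal (\<mu>1 + \<mu>2 - m * i) < v (coeff h1 j * coeff h2 (i - j))"
proof -
  have "ereal (\<mu>1 + \<mu>2) < wval m h1 j + wval m h2 (i - j)"
    using assms(5) ereal_add_le_less[OF assms(1) assms(3)]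
      ereal_add_le_less[OF assms(2)[of "i - j"], of \<mu>1 "wval m h1 j"]
    by (auto simp: add.commute)
  then show ?thesis
    using val_coeff_mult_term[OF assms(4), of h1 h2 m] by (metis ereal_less_plus_real_iff)
qed

text \<open>If \<open>h2\<close> attains its minimum only at \<open>k\<close>, then in the \<open>i\<close>-th coefficient of \<open>h1 * h2\<close> only
  the term with index \<open>i - k\<close> can have minimal valuation, so no cancellation occurs.\<close>

lemma wval_mult_eq:
  assumes "\<And>j. ereal \<mu>1 \<le> wval m h1 j" "\<And>j. ereal \<mu>2 \<le> wval m h2 j"
    and "\<And>j. j \<noteq> k \<Longrightarrow> ereal \<mu>2 < wval m h2 j" "wval m h2 k = ereal \<mu>2"
    and "k \<le> i" "wval m h1 (i - k) = ereal \<mu>1"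
  shows "wval m (h1 * h2) i = ereal (\<mu>1 + \<mu>2)"
proof -
  define T where "T j = coeff h1 j * coeff h2 (i - j)" for j
  define c where "c = \<mu>1 + \<mu>2 - m * i"
  define j0 where "j0 = i - k"
  have "v (T j0) + ereal (m * i) = ereal (\<mu>1 + \<mu>2)"
    using val_coeff_mult_term[of j0 i h1 h2 m] assms(4-6) unfolding T_def j0_def by simp
  then have "v (T j0) = ereal c"
    unfolding c_def by (simp add: ereal_eq_plus_real_iff)
  moreover have "ereal c < v (sum T ({..i} - {j0}))"
  proof (rule val_sum_gt)
    fix j assume "j \<in> {..i} - {j0}"
    then have j: "j \<le> i" "i - j \<noteq> k \<or> ereal \<mu>1 < wval m h1 j"
      using assms(5) unfolding j0_def by auto
    show "ereal c < v (T j)"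
      unfolding T_def c_def by (rule wval_mult_term_gt[OF assms(1-3) j])
  qed simp_all
  ultimately have "v (sum T {..i}) = ereal c"
    by (simp add: sum.remove[of _ j0] j0_def val_add_eq_left)
  then show ?thesis
    unfolding wval_def coeff_mult T_def c_def by (simp add: ereal_eq_plus_real_iff)
qed

lemma wval_mult_gt:
  assumes "\<And>j. ereal \<mu>1 \<le> wval m h1 j" "\<And>j. ereal \<mu>2 \<le> wval m h2 j"
    and "\<And>j. j \<noteq> k \<Longrightarrow> ereal \<mu>2 < wval m h2 j"
    and "\<not> (k \<le> i \<and> wval m h1 (i - k) = ereal \<mu>1)"
  shows "ereal (\<mu>1 + \<mu>2) < wval m (h1 * h2) i"
proof -
  have "ereal (\<mu>1 + \<mu>2 - m * i) < v (\<Sum>j\<le>i. coeff h1 j * coeff h2 (i - j))"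
  proof (rule val_sum_gt)
    fix j assume "j \<in> {..i}"
    moreover have "ereal \<mu>1 < wval m h1 j" if "i - j = k"
      using assms(1)[of j] assms(4) that \<open>j \<in> {..i}\<close> by (auto simp: order_less_le)
    ultimately show "ereal (\<mu>1 + \<mu>2 - m * i) < v (coeff h1 j * coeff h2 (i - j))"
      by (intro wval_mult_term_gt[OF assms(1-3)]) auto
  qed simp_all
  then show ?thesis
    unfolding wval_def coeff_mult by (simp add: ereal_less_plus_real_iff)
qed

lemma wval_mult_eq_iff:
  assumes "\<And>j. ereal \<mu>1 \<le> wval m h1 j" "\<And>j. ereal \<mu>2 \<le> wval m h2 j"
    and "\<And>j. j \<noteq> k \<Longrightarrow> ereal \<mu>2 < wval m h2 j" "wval m h2 k = ereal \<mu>2"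
  shows "wval m (h1 * h2) i = ereal (\<mu>1 + \<mu>2) \<longleftrightarrow> k \<le> i \<and> wval m h1 (i - k) = ereal \<mu>1"
  using wval_mult_eq[OF assms] wval_mult_gt[OF assms(1-3)] by fastforce

lemma wval_argmin_iff:
  assumes "\<And>j. ereal \<mu> \<le> wval m h j" "wval m h k = ereal \<mu>"
  shows "i \<in> wval_argmin m h \<longleftrightarrow> wval m h i = ereal \<mu>"
proof
  assume "i \<in> wval_argmin m h"
  then have "wval m h i \<le> wval m h k"
    unfolding wval_argmin_def by blast
  then show "wval m h i = ereal \<mu>"
    using assms by (simp add: order.antisym)
next
  assume "wval m h i = ereal \<mu>"
  then show "i \<in> wval_argmin m h"
    using assms(1) coeff_nonzero_if_wval_eq unfolding wval_argmin_def by simp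
qed

lemma wval_argmin_zero [simp]: "wval_argmin m 0 = {}"
  unfolding wval_argmin_def by simp

lemma wval_argmin_finite: "finite (wval_argmin m h)"
proof (rule finite_subset)
  show "wval_argmin m h \<subseteq> {..degree h}"
    unfolding wval_argmin_def by (auto intro: le_degree)
qed simp

lemma wval_argmin_value:
  assumes "k \<in> wval_argmin m h"
  obtains \<mu> where "wval m h k = ereal \<mu>" "\<And>j. ereal \<mu> \<le> wval m h j"
proof -
  have nz: "coeff h k \<noteq> 0" and min: "\<And>j. wval m h k \<le> wval m h j"
    using assms unfolding wval_argmin_def by simp_all
  obtain r where "v (coeff h k) = ereal r"
    using val_nonzero_eq_ereal[OF nz] by blast
  then have "wval m h k = ereal (r + m * k)"
    unfolding wval_def by simp
  with min show ?thesis
    by (intro that) simp_all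
qed

lemma wval_argmin_nonempty:
  assumes "h \<noteq> 0" shows "wval_argmin m h \<noteq> {}"
proof -
  define N where "N = {i. coeff h i \<noteq> 0}"
  have "finite N" "N \<noteq> {}"
    unfolding N_def using assms
    by (auto intro: finite_subset[of _ "{..degree h}"] le_degree simp: poly_eq_iff)
  then obtain k where k: "k \<in> N" "Min (wval m h ` N) = wval m h k"
    by (rule obtains_MIN)
  have "wval m h k \<le> wval m h j" if "j \<in> N" for j
    using k(2) \<open>finite N\<close> that by (metis Min_le finite_imageI image_eqI)
  moreover have "wval m h j = \<infinity>" if "j \<notin> N" for j
    using that unfolding N_def wval_def by simp
  ultimately have "wval m h k \<le> wval m h j" for j
    by (cases "j \<in> N") simp_all
  then show ?thesis
    using k(1) unfolding wval_argmin_def N_def by blast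
qed

lemma wval_argmin_mult:
  assumes "wval_argmin m h2 = {k}"
  shows "wval_argmin m (h1 * h2) = (\<lambda>i. i + k) ` wval_argmin m h1"
proof (cases "h1 = 0")
  case False
  then obtain k1 where "k1 \<in> wval_argmin m h1"
    using wval_argmin_nonempty by blast
  then obtain \<mu>1 where \<mu>1: "wval m h1 k1 = ereal \<mu>1" "\<And>j. ereal \<mu>1 \<le> wval m h1 j"
    by (metis wval_argmin_value)
  obtain \<mu>2 where \<mu>2: "wval m h2 k = ereal \<mu>2" "\<And>j. ereal \<mu>2 \<le> wval m h2 j"
    using assms by (metis insertI1 wval_argmin_value)
  have "ereal \<mu>2 < wval m h2 j" if "j \<noteq> k" for j
    using wval_argmin_iff[OF \<mu>2(2,1), of j] assms that \<mu>2(2)[of j] by auto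
  note eq_iff = wval_mult_eq_iff[OF \<mu>1(2) \<mu>2(2) this \<mu>2(1)]
  have "wval m (h1 * h2) (k1 + k) = ereal (\<mu>1 + \<mu>2)"
    using eq_iff \<mu>1(1) by simp
  then have "i \<in> wval_argmin m (h1 * h2) \<longleftrightarrow> wval m (h1 * h2) i = ereal (\<mu>1 + \<mu>2)" for i
    by (rule wval_argmin_iff[OF wval_mult_ge[OF \<mu>1(2) \<mu>2(2)]])
  also have "\<dots> i \<longleftrightarrow> i \<in> (\<lambda>i. i + k) ` wval_argmin m h1" for i
    by (simp add: eq_iff mem_image_add_iff wval_argmin_iff[OF \<mu>1(2,1)])
  finally show ?thesis
    by blast
qed simp

lemma wval_argmin_const:
  assumes "c \<noteq> 0" shows "wval_argmin m [:c:] = {0}"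
proof -
  obtain r where r: "v c = ereal r"
    using val_nonzero_eq_ereal[OF assms] by blast
  have W: "wval m [:c:] j = (if j = 0 then ereal r else \<infinity>)" for j
    unfolding wval_def using r by (cases j) simp_all
  have "i \<in> wval_argmin m [:c:] \<longleftrightarrow> wval m [:c:] i = ereal r" for i
    by (rule wval_argmin_iff[of r _ _ 0]) (simp_all add: W)
  also have "\<dots> i \<longleftrightarrow> i = 0" for i
    by (simp add: W)
  finally show ?thesis
    by blast
qed

lemma wval_linear:
  "wval m [:- z, 1:] k = (if k = 0 then v z else if k = 1 then ereal m else \<infinity>)"
  unfolding wval_def by (cases k) (auto simp: coeff_pCons split: nat.splits)

lemma wval_argmin_linear:
  assumes "v z \<noteq> ereal m" shows "\<exists>k. wval_argmin m [:- z, 1:] = {k}"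
proof (cases "v z < ereal m")
  case True
  then obtain r where r: "v z = ereal r" "r < m"
    using val_neq_minfinity[of z] by (cases "v z") auto
  have "i \<in> wval_argmin m [:- z, 1:] \<longleftrightarrow> wval m [:- z, 1:] i = ereal r" for i
    by (rule wval_argmin_iff[of r _ _ 0]) (use r in \<open>simp_all add: wval_linear\<close>)
  also have "\<dots> i \<longleftrightarrow> i = 0" for i
    using r by (simp add: wval_linear)
  finally show ?thesis
    by blast
next
  case False
  then have "ereal m < v z"
    using assms by simp
  then have "i \<in> wval_argmin m [:- z, 1:] \<longleftrightarrow> wval m [:- z, 1:] i = ereal m" for i
    by (intro wval_argmin_iff[of m _ _ 1]) (simp_all add: wval_linear less_imp_le)
  also have "\<dots> i \<longleftrightarrow> i = 1" for i
    using assms by (simp add: wval_linear)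
  finally show ?thesis
    by blast
qed

lemma wval_argmin_singleton_if_no_root:
  assumes "algebraically_closed_field TYPE('a)"
    and "g \<noteq> 0" "\<And>z. poly g z = 0 \<Longrightarrow> v z \<noteq> ereal m"
  shows "\<exists>k. wval_argmin m g = {k}"
  using assms(2,3)
proof (induction "degree g" arbitrary: g rule: less_induct)
  case less
  show ?case
  proof (cases "degree g = 0")
    case True
    then obtain c where "g = [:c:]" "c \<noteq> 0"
      using less.prems(1) by (metis degree_eq_zeroE pCons_0_0)
    then show ?thesis
      using wval_argmin_const by blast
  next
    case False
    then obtain z where z: "poly g z = 0"
      using assms(1) unfolding algebraically_closed_field_def by (meson less_one not_le)
    then obtain g' where g': "g = [:- z, 1:] * g'"
      by (metis dvdE poly_eq_0_iff_dvd)
    with less.prems have "g' \<noteq> 0" "\<And>y. poly g' y = 0 \<Longrightarrow> v y \<noteq> ereal m"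
      by auto
    moreover from this(1) have "degree g = degree [:- z, 1:] + degree g'"
      unfolding g' by (metis degree_mult_eq pCons_eq_0_iff zero_neq_one)
    ultimately obtain k where "wval_argmin m g' = {k}"
      using less.hyps[of g'] by auto
    moreover obtain k1 where "wval_argmin m [:- z, 1:] = {k1}"
      using wval_argmin_linear less.prems(2)[OF z] by blast
    ultimately have "wval_argmin m ([:- z, 1:] * g') = {k1 + k}"
      using wval_argmin_mult[of m g' k "[:- z, 1:]"] by (simp only: image_insert image_empty)
    then show ?thesis
      unfolding g' by blast
  qed
qed

section \<open>Lower edges of the Newton polygon\<close>

lemma np_points_finite: "finite (np_points v h)"
proof (rule finite_subset)
  show "np_points v h \<subseteq> np_point v h ` {..degree h}"
    unfolding np_points_def using le_degree by fastforce
qed simp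

lemma np_point_eq_iff [simp]: "np_point v h i = np_point v h j \<longleftrightarrow> i = j"
  unfolding np_point_def by auto

lemma wval_eq_inner_np_point:
  "coeff h j \<noteq> 0 \<Longrightarrow> wval m h j = ereal (inner (m, 1) (np_point v h j))"
  unfolding wval_def np_point_def inner_prod_def
  using val_nonzero_eq_ereal[of "coeff h j"]
  by (metis plus_ereal.simps(1) mult_1 add.commute inner_real_def fst_conv snd_conv)

lemma np_points_argmin:
  "{p \<in> np_points v h. \<forall>q \<in> np_points v h. inner (m, 1) p \<le> inner (m, 1) q}
    = np_point v h ` wval_argmin m h"
proof -
  have "(\<forall>q \<in> np_points v h. inner (m, 1) (np_point v h i) \<le> inner (m, 1) q)
      \<longleftrightarrow> (\<forall>j. wval m h i \<le> wval m h j)" if "coeff h i \<noteq> 0" for i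
  proof -
    have "wval m h i \<le> wval m h j \<longleftrightarrow>
        (coeff h j \<noteq> 0 \<longrightarrow> inner (m, 1) (np_point v h i) \<le> inner (m, 1) (np_point v h j))" for j
    proof (cases "coeff h j = 0")
      case False
      then show ?thesis
        using wval_eq_inner_np_point[of h i m] wval_eq_inner_np_point[of h j m] that by simp
    qed (simp add: wval_def)
    then show ?thesis
      unfolding np_points_def by blast
  qed
  then show ?thesis
    unfolding np_points_def wval_argmin_def by blast
qed

lemma newton_polygon_argmin:
  "{x \<in> newton_polygon v h. \<forall>y \<in> newton_polygon v h. inner (m, 1) x \<le> inner (m, 1) y}
    = convex hull (np_point v h ` wval_argmin m h)"
  unfolding newton_polygon_def argmin_convex_hull[OF np_points_finite] np_points_argmin ..

lemma np_points_Int_convex_hull_argmin: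
  "convex hull (np_point v h ` wval_argmin m h) \<inter> np_points v h = np_point v h ` wval_argmin m h"
proof -
  have "np_points v h \<subseteq> newton_polygon v h"
    unfolding newton_polygon_def by (rule hull_subset)
  then have "{x \<in> newton_polygon v h. \<forall>y \<in> newton_polygon v h. inner (m, 1) x \<le> inner (m, 1) y}
      \<inter> np_points v h
    \<subseteq> {p \<in> np_points v h. \<forall>q \<in> np_points v h. inner (m, 1) p \<le> inner (m, 1) q}"
    by blast
  then show ?thesis
    unfolding newton_polygon_argmin np_points_argmin
    using np_points_argmin hull_subset by fastforce
qed

lemma inner_np_point_argmin_eq:
  assumes "i \<in> wval_argmin m h" "j \<in> wval_argmin m h"
  shows "inner (m, 1) (np_point v h i) = inner (m, 1) (np_point v h j)"
proof -
  have "np_point v h i \<in> np_point v h ` wval_argmin m h"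
    "np_point v h j \<in> np_point v h ` wval_argmin m h"
    using assms by simp_all
  then have "np_point v h i \<in> np_points v h" "np_point v h j \<in> np_points v h"
    "\<forall>q \<in> np_points v h. inner (m, 1) (np_point v h i) \<le> inner (m, 1) q"
    "\<forall>q \<in> np_points v h. inner (m, 1) (np_point v h j) \<le> inner (m, 1) q"
    unfolding np_points_argmin[symmetric] by simp_all
  then show ?thesis
    by (simp add: order.antisym)
qed

lemma aff_dim_np_argmin_eq_1_iff:
  "aff_dim (convex hull (np_point v h ` wval_argmin m h)) = 1
    \<longleftrightarrow> (\<exists>a b. a < b \<and> a \<in> wval_argmin m h \<and> b \<in> wval_argmin m h)"
proof
  assume "aff_dim (convex hull (np_point v h ` wval_argmin m h)) = 1"
  then have not_sing: "\<not> np_point v h ` wval_argmin m h \<subseteq> {x}" for x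
    using aff_dim_subset[of "np_point v h ` wval_argmin m h" "{x}"] by (auto simp: aff_dim_convex_hull)
  then obtain i where "i \<in> wval_argmin m h"
    by blast
  moreover from this obtain j where "j \<in> wval_argmin m h" "j \<noteq> i"
    using not_sing[of "np_point v h i"] by blast
  ultimately show "\<exists>a b. a < b \<and> a \<in> wval_argmin m h \<and> b \<in> wval_argmin m h"
    by (metis linorder_neqE_nat)
next
  assume "\<exists>a b. a < b \<and> a \<in> wval_argmin m h \<and> b \<in> wval_argmin m h"
  then obtain a b where ab: "a < b" "a \<in> wval_argmin m h" "b \<in> wval_argmin m h"
    by blast
  have "aff_dim {np_point v h a, np_point v h b} \<le> aff_dim (np_point v h ` wval_argmin m h)"
    by (rule aff_dim_subset) (use ab in simp)
  then have lower: "1 \<le> aff_dim (np_point v h ` wval_argmin m h)"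
    using ab(1) by simp
  have "np_point v h ` wval_argmin m h
      \<subseteq> {x :: real \<times> real. inner (m, 1) x = inner (m, 1) (np_point v h a)}"
    using inner_np_point_argmin_eq ab(2) by blast
  then have "aff_dim (np_point v h ` wval_argmin m h)
      \<le> aff_dim {x :: real \<times> real. inner (m, 1) x = inner (m, 1) (np_point v h a)}"
    by (rule aff_dim_subset)
  then have upper: "aff_dim (np_point v h ` wval_argmin m h) \<le> 1"
    by (simp add: zero_prod_def)
  show "aff_dim (convex hull (np_point v h ` wval_argmin m h)) = 1"
    using lower upper unfolding aff_dim_convex_hull by simp
qed

text \<open>Scaling the inner normal \<open>u\<close> of a lower edge to \<open>(m, 1)\<close> shows that it is the face on
  which \<open>wval m h\<close> is minimal.\<close>

lemma lower_edge_iff: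
  "lower_edge v h S \<longleftrightarrow> (\<exists>m a b. S = convex hull (np_point v h ` wval_argmin m h)
     \<and> a < b \<and> a \<in> wval_argmin m h \<and> b \<in> wval_argmin m h)"
proof -
  have "lower_edge v h S \<longleftrightarrow>
      (\<exists>m. S = convex hull (np_point v h ` wval_argmin m h) \<and> aff_dim S = 1)"
  proof
    assume "lower_edge v h S"
    then obtain u where u: "snd u > 0" "aff_dim S = 1"
      "S = {x \<in> newton_polygon v h. \<forall>y \<in> newton_polygon v h. inner u x \<le> inner u y}"
      unfolding lower_edge_def by blast
    define m where "m = fst u / snd u"
    have "u = snd u *\<^sub>R (m, 1)"
      using u(1) by (simp add: m_def prod_eq_iff)
    then have "inner u x \<le> inner u y \<longleftrightarrow> inner (m, 1) x \<le> inner (m, 1) y" for x y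
      using u(1) by (metis inner_scaleR_left mult_le_cancel_left_pos)
    then show "\<exists>m. S = convex hull (np_point v h ` wval_argmin m h) \<and> aff_dim S = 1"
      using u(2,3) newton_polygon_argmin[where m = m and h = h] by auto
  next
    assume "\<exists>m. S = convex hull (np_point v h ` wval_argmin m h) \<and> aff_dim S = 1"
    then obtain m where "aff_dim S = 1" and S:
      "S = {x \<in> newton_polygon v h. \<forall>y \<in> newton_polygon v h. inner (m, 1) x \<le> inner (m, 1) y}"
      using newton_polygon_argmin by blast
    moreover have "S face_of newton_polygon v h"
      unfolding S newton_polygon_def by (rule argmin_face_of) simp
    ultimately show "lower_edge v h S"
      unfolding lower_edge_def by (intro conjI exI[of _ "(m, 1)"]) simp_all
  qed
  then show ?thesis
    using aff_dim_np_argmin_eq_1_iff by auto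
qed

lemma regular_poly_wval_argminD:
  assumes "regular_poly v p h" "a < b" "a \<in> wval_argmin m h" "b \<in> wval_argmin m h"
  shows "wval_argmin m h = {a, b} \<and> \<not> p dvd (b - a)"
proof -
  define A where "A = wval_argmin m h"
  define S where "S = convex hull (np_point v h ` A)"
  have "lower_edge v h S"
    unfolding lower_edge_iff S_def A_def using assms(2-4) by blast
  note edge = assms(1)[unfolded regular_poly_def, rule_format, OF this]
  have "card A = 2"
    using edge np_points_Int_convex_hull_argmin card_image[of "np_point v h" A]
    unfolding S_def A_def by (simp add: inj_on_def)
  moreover have "{a, b} \<subseteq> A" "card {a, b} = 2"
    using assms(2-4) unfolding A_def by simp_all
  ultimately have A: "A = {a, b}"
    using card_subset_eq[OF wval_argmin_finite, of "{a, b}" m h] unfolding A_def by simp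
  moreover have "np_point v h a extreme_point_of S" "np_point v h b extreme_point_of S"
    unfolding S_def A by (simp_all add: extreme_point_of_convex_hull_2)
  moreover have "coeff h a \<noteq> 0" "coeff h b \<noteq> 0"
    using assms(3,4) unfolding wval_argmin_def by simp_all
  ultimately show ?thesis
    using edge assms(2) unfolding A_def by blast
qed

lemma regular_poly_wval_argminI:
  assumes "\<And>m a b. a < b \<Longrightarrow> a \<in> wval_argmin m h \<Longrightarrow> b \<in> wval_argmin m h
    \<Longrightarrow> wval_argmin m h = {a, b} \<and> \<not> p dvd (b - a)"
  shows "regular_poly v p h"
  unfolding regular_poly_def
proof (intro allI impI)
  fix S assume "lower_edge v h S"
  then obtain m a b where S: "S = convex hull (np_point v h ` wval_argmin m h)"
    and ab: "a < b" "a \<in> wval_argmin m h" "b \<in> wval_argmin m h"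
    unfolding lower_edge_iff by blast
  then have A: "wval_argmin m h = {a, b}" and ndvd: "\<not> p dvd (b - a)"
    using assms by blast+
  have SP: "S \<inter> np_points v h = {np_point v h a, np_point v h b}"
    using np_points_Int_convex_hull_argmin[where m = m and h = h] unfolding S A by simp
  show "card (S \<inter> np_points v h) = 2 \<and>
    (\<forall>s s'. s' < s \<and> coeff h s \<noteq> 0 \<and> coeff h s' \<noteq> 0 \<and>
       np_point v h s extreme_point_of S \<and> np_point v h s' extreme_point_of S \<longrightarrow> \<not> p dvd (s - s'))"
  proof (intro conjI allI impI)
    show "card (S \<inter> np_points v h) = 2"
      using SP ab(1) by simp
    fix s s'
    assume ss': "s' < s \<and> coeff h s \<noteq> 0 \<and> coeff h s' \<noteq> 0 \<and>
       np_point v h s extreme_point_of S \<and> np_point v h s' extreme_point_of S"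
    then have "np_point v h s \<in> S \<inter> np_points v h" "np_point v h s' \<in> S \<inter> np_points v h"
      unfolding extreme_point_of_def np_points_def by auto
    then have "s = b" "s' = a"
      using ss' ab(1) unfolding SP by auto
    then show "\<not> p dvd (s - s')"
      using ndvd by simp
  qed
qed

section \<open>Regularity of the factors\<close>

lemma regular_poly_monom: "regular_poly v p (monom c k)"
proof (rule regular_poly_wval_argminI)
  fix m a b
  assume "a < b" "a \<in> wval_argmin m (monom c k)" "b \<in> wval_argmin m (monom c k)"
  then show "wval_argmin m (monom c k) = {a, b} \<and> \<not> p dvd (b - a)"
    unfolding wval_argmin_def by (simp add: coeff_monom split: if_splits)
qed

text \<open>Every edge of \<open>h\<close> whose slope meets a vertex of \<open>g\<close> reappears, translated, as an edge
  of \<open>h * g\<close>.\<close>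

lemma regular_poly_mult_left:
  assumes "regular_poly v p (h * g)"
    and "\<And>m a b. a < b \<Longrightarrow> a \<in> wval_argmin m h \<Longrightarrow> b \<in> wval_argmin m h
      \<Longrightarrow> \<exists>k. wval_argmin m g = {k}"
  shows "regular_poly v p h"
proof (rule regular_poly_wval_argminI)
  fix m a b
  assume ab: "a < b" "a \<in> wval_argmin m h" "b \<in> wval_argmin m h"
  then obtain k where "wval_argmin m g = {k}"
    using assms(2) by blast
  then have shift: "i \<in> wval_argmin m h \<longleftrightarrow> i + k \<in> wval_argmin m (h * g)" for i
    by (simp add: wval_argmin_mult mem_image_add_iff)
  then have "wval_argmin m (h * g) = {a + k, b + k} \<and> \<not> p dvd (b + k - (a + k))"
    using ab by (intro regular_poly_wval_argminD[OF assms(1)]) simp_all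
  then show "wval_argmin m h = {a, b} \<and> \<not> p dvd (b - a)"
    using shift by auto
qed

lemma poly_val_factor_eq_0:
  assumes "f \<noteq> 0" "poly (val_factor v f m) z = 0"
  shows "v z = m"
proof -
  have "finite {\<zeta>. poly f \<zeta> = 0 \<and> v \<zeta> = m}"
    using poly_roots_finite[OF assms(1)] by (rule finite_subset[rotated]) auto
  then have "poly f z = 0 \<and> v z = m"
    using assms(2) unfolding val_factor_def poly_prod by (auto simp: prod_zero_iff)
  then show ?thesis
    by simp
qed

lemma val_factor_cofactor:
  assumes "f \<noteq> 0"
  obtains g where "f = val_factor v f m * g" "g \<noteq> 0" "\<And>z. poly g z = 0 \<Longrightarrow> v z \<noteq> m"
proof -
  define A where "A = {\<zeta>. poly f \<zeta> = 0 \<and> v \<zeta> = m}"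
  have fm: "val_factor v f m = (\<Prod>z\<in>A. [:- z, 1:] ^ order z f)"
    unfolding val_factor_def A_def ..
  have "finite A"
    using poly_roots_finite[OF assms] unfolding A_def by (rule finite_subset[rotated]) auto
  obtain g where fg: "f = val_factor v f m * g"
    using prod_root_powers_dvd[OF assms \<open>finite A\<close>] unfolding fm by (elim dvdE)
  show thesis
  proof (rule that[OF fg])
    show "g \<noteq> 0"
      using fg assms by auto
    show "v z \<noteq> m" if "poly g z = 0" for z
    proof
      assume "v z = m"
      moreover have "poly f z = 0"
        using fg that by (metis mult_zero_right poly_mult)
      ultimately have "z \<in> A"
        unfolding A_def by simp
      then show False
        using poly_cofactor_prod_root_powers_neq_0[OF fg[unfolded fm] assms \<open>finite A\<close>] that by simp
    qed
  qed
qed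

lemma regular_poly_val_factor:
  assumes "algebraically_closed_field TYPE('a)" "regular_poly v p f" "f \<noteq> 0"
  shows "regular_poly v p (val_factor v f (ereal m))"
proof -
  obtain g where fg: "f = val_factor v f (ereal m) * g" and "g \<noteq> 0"
    and g_roots: "\<And>z. poly g z = 0 \<Longrightarrow> v z \<noteq> ereal m"
    using val_factor_cofactor[OF assms(3)] by blast
  then have "val_factor v f (ereal m) \<noteq> 0"
    using assms(3) by auto
  have fm_single: "\<exists>k. wval_argmin m' (val_factor v f (ereal m)) = {k}" if "m' \<noteq> m" for m'
    using wval_argmin_singleton_if_no_root[OF assms(1) \<open>val_factor v f (ereal m) \<noteq> 0\<close>]
      poly_val_factor_eq_0[OF assms(3)] that by fastforce
  show ?thesis
  proof (rule regular_poly_mult_left)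
    show "regular_poly v p (val_factor v f (ereal m) * g)"
      using assms(2) fg by simp
    fix m' a b
    assume ab: "a < b" "a \<in> wval_argmin m' (val_factor v f (ereal m))"
      "b \<in> wval_argmin m' (val_factor v f (ereal m))"
    have "m' = m"
    proof (rule ccontr)
      assume "m' \<noteq> m"
      then obtain k where "wval_argmin m' (val_factor v f (ereal m)) = {k}"
        using fm_single by blast
      then show False
        using ab by simp
    qed
    then show "\<exists>k. wval_argmin m' g = {k}"
      using wval_argmin_singleton_if_no_root[OF assms(1) \<open>g \<noteq> 0\<close> g_roots] by simp
  qed
qed

end

theorem theorem2p4:
  fixes K :: "'a::field set" and v :: "'a \<Rightarrow> ereal" and \<pi> :: 'a
    and p q :: nat and f :: "'a poly"
  assumes "algebraically_closed_field TYPE('a)"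
    and "is_subfield K"
    and "algebraic_over K"
    and "nonarch_valuation v"
    and "discrete_on_with_uniformizer v K \<pi>"
    and "complete_wrt v K"
    and "finite (residue_field v K \<pi>)"
    and "card (residue_field v K \<pi>) = q"
    and "prime p"
    and "(of_nat p :: 'a, 0) \<in> residue_rel v K \<pi>"
    and "\<forall>i. coeff f i \<in> K"
    and "lead_coeff f = 1"
    and "degree f \<ge> 1"
    and "regular_poly v p f"
  shows "\<forall>m. (\<exists>\<zeta>. poly f \<zeta> = 0 \<and> v \<zeta> = m) \<longrightarrow> regular_poly v p (val_factor v f m)"
proof (intro allI impI)
  fix m assume "\<exists>\<zeta>. poly f \<zeta> = 0 \<and> v \<zeta> = m"
  then obtain z0 where z0: "poly f z0 = 0" "v z0 = m"
    by blast
  interpret valued_field v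
    by unfold_locales (fact assms(4))
  have "f \<noteq> 0"
    using assms(12) by auto
  show "regular_poly v p (val_factor v f m)"
  proof (cases m)
    case (real r)
    then show ?thesis
      using regular_poly_val_factor[OF assms(1,14) \<open>f \<noteq> 0\<close>] by simp
  next
    case PInf
    then have "{\<zeta>. poly f \<zeta> = 0 \<and> v \<zeta> = m} = {0}"
      using z0 val_eq_infinity_iff by auto
    then have "val_factor v f m = monom 1 (order 0 f)"
      unfolding val_factor_def by (simp add: monom_altdef)
    then show ?thesis
      by (simp add: regular_poly_monom)
  qed (use z0 val_neq_minfinity in simp)
qed

end
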